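(* Let $\bm{X}\in\mathbb{R}^{n_1\times r}$, $\bm{Y}\in\mathbb{R}^{n_2\times r}$, and let $\bm{X}_\star,\bm{Y}_\star$, $\bm{M}_\star=\bm{X}_\star\bm{Y}_\star^\top$ be as in the context. Suppose that $\bm{I}_r$ is a minimizer of $\|\bm{X}\bm{P}-\bm{X}_\star\|_{\mathrm{F}}^2+\|\bm{Y}\bm{P}^{-\top}-\bm{Y}_\star\|_{\mathrm{F}}^2$ over invertible $\bm{P}\in\mathbb{R}^{r\times r}$. Then \[ \big\langle\bm{X}-\bm{X}_\star,(\bm{X}\bm{Y}^\top-\bm{M}_\star)\bm{Y}\big\rangle\ge\|\bm{Y}(\bm{X}-\bm{X}_\star)^\top\|_{\mathrm{F}}^2-\frac14\|\bm{X}-\bm{X}_\star\|_{\mathrm{F}}^4, \] and \[ \big\langle\bm{Y}-\bm{Y}_\star,(\bm{X}\bm{Y}^\top-\bm{M}_\star)^\top\bm{X}\big\rangle\ge\|\bm{X}(\bm{Y}-\bm{Y}_\star)^\top\|_{\mathrm{F}}^2-\frac14\|\bm{Y}-\bm{Y}_\star\|_{\mathrm{F}}^4. \]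
   Context: $\bm{M}_\star\in\mathbb{R}^{n_1\times n_2}$ has rank $r$ and compact SVD $\bm{M}_\star=\bm{U}_\star\bm{\Sigma}_\star\bm{V}_\star^\top$; $\bm{X}_\star=\bm{U}_\star\bm{\Sigma}_\star^{1/2}$, $\bm{Y}_\star=\bm{V}_\star\bm{\Sigma}_\star^{1/2}$, so $\bm{M}_\star=\bm{X}_\star\bm{Y}_\star^\top$. $\langle\bm{A},\bm{B}\rangle=\mathrm{Tr}(\bm{B}^\top\bm{A})$ and $\bm{P}^{-\top}=(\bm{P}^{-1})^\top$. *)

theory Defs
  imports "HOL-Analysis.Analysis"
begin

text \<open>Matrices are rendered as real^'c^'r (rows indexed by 'r, columns by 'c).\<close>

definition mat_inner :: "real^'c^'r \<Rightarrow> real^'c^'r \<Rightarrow> real" where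
  "mat_inner A B = trace (transpose B ** A)"

definition frob_norm :: "real^'c^'r \<Rightarrow> real" where
  "frob_norm A = sqrt (mat_inner A A)"

definition diag_mat :: "real^'n \<Rightarrow> real^'n^'n" where
  "diag_mat s = (\<chi> i j. if i = j then s $ i else 0)"

text \<open>Compact SVD M = U Sigma V^T: U, V have orthonormal columns, Sigma diagonal with
  positive entries (so rank M equals the number of columns r).\<close>
definition compact_svd :: "real^'n2^'n1 \<Rightarrow> real^'r^'n1 \<Rightarrow> real^'r \<Rightarrow> real^'r^'n2 \<Rightarrow> bool" where
  "compact_svd M U s V \<longleftrightarrow>
     transpose U ** U = mat 1 \<and> transpose V ** V = mat 1 \<and> (\<forall>i. s $ i > 0) \<and>
     M = U ** diag_mat s ** transpose V"

end

theory Submission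
  imports Defs
begin

text \<open>Optimality of the identity alignment is used only through its first-order condition.
  Along \<open>P = I + t E\<close> with \<open>E\<close> a matrix unit the inverse of \<open>P\<close> is explicit, and the
  vanishing derivative at \<open>t = 0\<close> gives the balancing condition
  \<open>X\<^sup>T (X - Xs) = (Y - Ys)\<^sup>T Y\<close>. With \<open>D = X - Xs\<close> and \<open>A = Xs\<^sup>T D\<close> this condition
  turns the left-hand side into \<open>|Y D\<^sup>T|\<^sup>2 + <A, A + D\<^sup>T D>\<close>, and
  \<open><a, a + b> \<ge> -|b|\<^sup>2/4\<close> together with \<open>|D\<^sup>T D| \<le> |D|\<^sup>2\<close> gives the bound.
  Transposing the balancing condition exchanges the roles of \<open>X\<close> and \<open>Y\<close>, which gives
  the second inequality.\<close>

lemma mat_inner_eq_inner: "mat_inner A B = inner A B"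
  unfolding mat_inner_def trace_def matrix_matrix_mult_def transpose_def inner_vec_def
  by (simp add: mult.commute) (rule sum.swap)

lemma frob_norm_eq_norm: "frob_norm A = norm A"
  by (simp add: frob_norm_def mat_inner_eq_inner norm_eq_sqrt_inner)

lemma matrix_add_rdistrib: "((A::'a::semiring_1^'n^'m) + B) ** C = A ** C + B ** C"
  by (simp add: matrix_matrix_mult_def vec_eq_iff sum.distrib distrib_right)

lemma matrix_diff_ldistrib: "(A::'a::ring_1^'n^'m) ** (B - C) = A ** B - A ** C"
  by (simp add: matrix_matrix_mult_def vec_eq_iff sum_subtractf right_diff_distrib)

lemma transpose_add: "transpose (A + B) = transpose A + transpose B"
  by (simp add: transpose_def vec_eq_iff)

lemma transpose_diff: "transpose (A - B) = transpose A - transpose B"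
  by (simp add: transpose_def vec_eq_iff)

lemma inner_transpose: "inner (transpose A) (transpose B) = inner A (B :: real^'n^'m)"
  unfolding inner_vec_def transpose_def by simp (rule sum.swap)

lemma norm_transpose: "norm (transpose A) = norm (A :: real^'n^'m)"
  by (simp add: norm_eq_sqrt_inner inner_transpose)

lemma inner_matrix_mult_right: "inner A (B ** C) = inner (A ** transpose C) (B :: real^'n^'m)"
  unfolding inner_vec_def matrix_matrix_mult_def transpose_def
  by (simp add: sum_distrib_left sum_distrib_right mult_ac) (rule sum.cong[OF refl], rule sum.swap)

lemma inner_matrix_mult_left: "inner A (B ** C) = inner (transpose B ** A) (C :: real^'n^'m)"
proof -
  have "inner A (B ** C) = inner (transpose A) (transpose C ** transpose B)"
    by (simp add: inner_transpose flip: matrix_transpose_mul)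
  also have "\<dots> = inner (transpose (transpose B ** A)) (transpose C)"
    by (simp add: inner_matrix_mult_right matrix_transpose_mul)
  finally show ?thesis by (simp only: inner_transpose)
qed

lemma norm_matrix_mult_le: "norm (A ** B) \<le> norm A * norm (B :: real^'n^'m)"
proof (rule power2_le_imp_le)
  let ?b = "\<lambda>j. transpose B $ j"
  have "(norm (A ** B))\<^sup>2 = (\<Sum>i\<in>UNIV. \<Sum>j\<in>UNIV. (inner (A $ i) (?b j))\<^sup>2)"
    unfolding power2_norm_eq_inner
    by (simp add: inner_vec_def matrix_matrix_mult_def transpose_def power2_eq_square)
  also have "\<dots> \<le> (\<Sum>i\<in>UNIV. \<Sum>j\<in>UNIV. (norm (A $ i))\<^sup>2 * (norm (?b j))\<^sup>2)"
    by (intro sum_mono) (metis Cauchy_Schwarz_ineq power_mult_distrib power2_norm_eq_inner)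
  also have "\<dots> = (\<Sum>i\<in>UNIV. (norm (A $ i))\<^sup>2) * (\<Sum>j\<in>UNIV. (norm (?b j))\<^sup>2)"
    by (rule sum_product[symmetric])
  also have "\<dots> = (norm A * norm B)\<^sup>2"
    by (simp add: power_mult_distrib power2_norm_eq_inner inner_vec_def flip: norm_transpose[of B])
  finally show "(norm (A ** B))\<^sup>2 \<le> (norm A * norm B)\<^sup>2" .
qed simp

lemma inner_add_right_ge: "- (norm b)\<^sup>2 / 4 \<le> inner a (a + b)"
  for a b :: "'a::real_inner"
proof -
  have "inner a (a + b) = (norm (a + (1/2) *\<^sub>R b))\<^sup>2 - (norm b)\<^sup>2 / 4"
    by (simp add: power2_norm_eq_inner inner_add_left inner_add_right inner_commute[of b a]
        field_simps)
  then show ?thesis by simp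
qed

lemma matrix_inv_eqI:
  fixes P :: "'a::field^'n^'n"
  assumes PQ: "P ** Q = mat 1"
  shows "invertible P" and "matrix_inv P = Q"
proof -
  have QP: "Q ** P = mat 1" using PQ by (rule matrix_left_right_inverse1)
  then show "invertible P" using PQ unfolding invertible_def by blast
  have "P ** matrix_inv P = mat 1"
    unfolding matrix_inv_def by (rule someI2[of _ Q]) (use PQ QP in auto)
  then have "Q ** (P ** matrix_inv P) = Q" by simp
  then show "matrix_inv P = Q" by (simp add: matrix_mul_assoc QP)
qed

lemma matrix_inv_mat1_add_scaleR:
  fixes E :: "real^'n^'n"
  assumes "E ** E = k *\<^sub>R E" and "1 + k * t \<noteq> 0"
  shows "invertible (mat 1 + t *\<^sub>R E)"
    and "matrix_inv (mat 1 + t *\<^sub>R E) = mat 1 + (- t / (1 + k * t)) *\<^sub>R E"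
proof -
  define s where "s = - t / (1 + k * t)"
  have "(mat 1 + t *\<^sub>R E) ** (mat 1 + s *\<^sub>R E) = mat 1 + (s + t + t * s * k) *\<^sub>R E"
    by (simp add: matrix_add_ldistrib matrix_add_rdistrib matrix_scalar_ac assms(1)
        flip: scalar_matrix_assoc) (simp add: algebra_simps)
  also have "s + t + t * s * k = 0"
    using assms(2) by (simp add: s_def field_simps)
  finally show "invertible (mat 1 + t *\<^sub>R E)" and "matrix_inv (mat 1 + t *\<^sub>R E) = mat 1 + s *\<^sub>R E"
    by (simp_all add: matrix_inv_eqI)
qed

lemma matrix_unit_square:
  "axis i (axis j 1) ** axis i (axis j 1)
     = (if i = j then 1 else 0) *\<^sub>R (axis i (axis j 1) :: real^'n^'n)"
  by (auto simp: vec_eq_iff matrix_matrix_mult_def axis_def if_distrib[of "\<lambda>x. x * _"]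
      cong: if_cong)

lemma transpose_matrix_unit: "transpose (axis i (axis j 1)) = axis j (axis i 1)"
  by (auto simp: vec_eq_iff transpose_def axis_def)

lemma inner_matrix_unit: "inner A (axis i (axis j 1)) = A $ i $ j"
  by (simp add: inner_axis)

lemma power2_norm_add_scaleR:
  "(norm (a + t *\<^sub>R b))\<^sup>2 = (norm a)\<^sup>2 + 2 * t * inner a b + t\<^sup>2 * (norm b)\<^sup>2"
  for a b :: "'a::real_inner"
  unfolding power2_norm_eq_inner
  by (simp add: inner_add_left inner_add_right inner_commute[of b a] power2_eq_square algebra_simps)

definition alignment_loss ::
    "real^'r^'n1 \<Rightarrow> real^'r^'n1 \<Rightarrow> real^'r^'n2 \<Rightarrow> real^'r^'n2 \<Rightarrow> real^'r^'r \<Rightarrow> real" where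
  "alignment_loss X Xs Y Ys P =
     (frob_norm (X ** P - Xs))\<^sup>2 + (frob_norm (Y ** transpose (matrix_inv P) - Ys))\<^sup>2"

lemma alignment_loss_stationary:
  fixes X Xs :: "real^'r^'n1" and Y Ys :: "real^'r^'n2"
  assumes min: "\<forall>P. invertible P \<longrightarrow> alignment_loss X Xs Y Ys (mat 1) \<le> alignment_loss X Xs Y Ys P"
    and E: "E ** E = k *\<^sub>R E"
  shows "inner (X - Xs) (X ** E) = inner (Y - Ys) (Y ** transpose E)"
proof -
  define u where "u t = - t / (1 + k * t)" for t
  define g where "g t = (norm (X - Xs + t *\<^sub>R (X ** E)))\<^sup>2
                        + (norm (Y - Ys + u t *\<^sub>R (Y ** transpose E)))\<^sup>2" for t
  have g_loss: "g t = alignment_loss X Xs Y Ys (mat 1 + t *\<^sub>R E)" if "1 + k * t \<noteq> 0" for t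
  proof -
    have inv: "matrix_inv (mat 1 + t *\<^sub>R E) = mat 1 + u t *\<^sub>R E"
      unfolding u_def by (rule matrix_inv_mat1_add_scaleR(2)[OF E that])
    have res_X: "X ** (mat 1 + t *\<^sub>R E) - Xs = X - Xs + t *\<^sub>R (X ** E)"
      by (simp add: matrix_add_ldistrib matrix_scalar_ac flip: scalar_matrix_assoc)
    have res_Y: "Y ** transpose (mat 1 + u t *\<^sub>R E) - Ys = Y - Ys + u t *\<^sub>R (Y ** transpose E)"
      by (simp add: transpose_add transpose_scalar matrix_add_ldistrib matrix_scalar_ac
          flip: scalar_matrix_assoc)
    show ?thesis
      by (simp only: g_def alignment_loss_def frob_norm_eq_norm inv res_X res_Y)
  qed
  have local_min: "\<forall>t. \<bar>0 - t\<bar> < 1 / (\<bar>k\<bar> + 1) \<longrightarrow> g 0 \<le> g t"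
  proof (intro allI impI)
    fix t :: real
    assume "\<bar>0 - t\<bar> < 1 / (\<bar>k\<bar> + 1)"
    have "\<bar>k * t\<bar> < 1"
      using \<open>\<bar>0 - t\<bar> < _\<close> by (simp add: abs_mult field_simps)
    then have "1 + k * t \<noteq> 0" by linarith
    with min matrix_inv_mat1_add_scaleR(1)[OF E] show "g 0 \<le> g t"
      using g_loss[of 0] g_loss[of t] by simp
  qed
  have deriv: "(g has_real_derivative
      2 * inner (X - Xs) (X ** E) - 2 * inner (Y - Ys) (Y ** transpose E)) (at 0)"
    unfolding g_def power2_norm_add_scaleR u_def
    by (rule derivative_eq_intros refl | simp)+
  have "0 < 1 / (\<bar>k\<bar> + 1)"
    by (simp add: add_nonneg_pos)
  from DERIV_local_min[OF deriv this local_min] show ?thesis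
    by simp
qed

lemma alignment_minimizer_balanced:
  fixes X Xs :: "real^'r^'n1" and Y Ys :: "real^'r^'n2"
  assumes min: "\<forall>P. invertible P \<longrightarrow> alignment_loss X Xs Y Ys (mat 1) \<le> alignment_loss X Xs Y Ys P"
  shows "transpose X ** (X - Xs) = transpose (Y - Ys) ** Y"
proof -
  have "(transpose X ** (X - Xs)) $ i $ j = (transpose (Y - Ys) ** Y) $ i $ j" for i j
  proof -
    let ?E = "axis i (axis j 1) :: real^'r^'r"
    have "(transpose X ** (X - Xs)) $ i $ j = inner (X - Xs) (X ** ?E)"
      by (simp add: inner_matrix_mult_left inner_matrix_unit)
    also have "\<dots> = inner (Y - Ys) (Y ** transpose ?E)"
      using min matrix_unit_square by (rule alignment_loss_stationary)
    also have "\<dots> = (transpose Y ** (Y - Ys)) $ j $ i"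
      by (simp add: inner_matrix_mult_left transpose_matrix_unit inner_matrix_unit)
    also have "\<dots> = (transpose (Y - Ys) ** Y) $ i $ j"
      by (simp add: matrix_matrix_mult_def transpose_def mult.commute)
    finally show ?thesis .
  qed
  then show ?thesis by (simp add: vec_eq_iff)
qed

lemma inner_residual_gradient_ge:
  fixes X Xs :: "real^'r^'n1" and Y Ys :: "real^'r^'n2"
  assumes bal: "transpose X ** (X - Xs) = transpose (Y - Ys) ** Y"
  shows "(norm (Y ** transpose (X - Xs)))\<^sup>2 - (norm (X - Xs))^4 / 4
           \<le> inner (X - Xs) ((X ** transpose Y - Xs ** transpose Ys) ** Y)"
proof -
  define D where "D = X - Xs"
  define F where "F = Y - Ys"
  define A where "A = transpose Xs ** D"
  define B where "B = transpose D ** D"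
  have X: "X = Xs + D" and Ys: "Ys = Y - F" by (simp_all add: D_def F_def)
  have "X ** transpose Y - Xs ** transpose Ys = D ** transpose Y + Xs ** transpose F"
    by (simp add: X Ys matrix_add_rdistrib matrix_diff_ldistrib transpose_diff)
  then have "inner D ((X ** transpose Y - Xs ** transpose Ys) ** Y)
      = inner D (D ** transpose Y ** Y) + inner D (Xs ** (transpose F ** Y))"
    by (simp add: matrix_add_rdistrib inner_add_right matrix_mul_assoc)
  also have "inner D (D ** transpose Y ** Y) = (norm (D ** transpose Y))\<^sup>2"
    by (simp add: inner_matrix_mult_right power2_norm_eq_inner)
  also have "norm (D ** transpose Y) = norm (Y ** transpose D)"
    by (metis norm_transpose matrix_transpose_mul transpose_transpose)
  also have "transpose F ** Y = transpose X ** D"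
    using bal by (simp add: D_def F_def)
  also have "\<dots> = A + B"
    by (simp add: A_def B_def X transpose_add matrix_add_rdistrib)
  also have "inner D (Xs ** (A + B)) = inner A (A + B)"
    by (simp add: inner_matrix_mult_left A_def)
  finally have expand: "inner D ((X ** transpose Y - Xs ** transpose Ys) ** Y)
      = (norm (Y ** transpose D))\<^sup>2 + inner A (A + B)" .
  have "norm B \<le> (norm D)\<^sup>2"
    unfolding B_def using norm_matrix_mult_le[of "transpose D" D]
    by (simp add: norm_transpose power2_eq_square)
  then have "(norm B)\<^sup>2 \<le> (norm D)^4"
    using power_mono[of "norm B" "(norm D)\<^sup>2" 2] by (simp flip: power_mult)
  with expand inner_add_right_ge[of B A] show ?thesis
    by (simp add: D_def)
qed

lemma diag_mat_mult: "diag_mat a ** diag_mat b = diag_mat (a * b)"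
  by (auto simp: vec_eq_iff diag_mat_def matrix_matrix_mult_def if_distrib[of "\<lambda>x. x * _"]
      cong: if_cong)

lemma transpose_diag_mat: "transpose (diag_mat a) = diag_mat a"
  by (auto simp: vec_eq_iff diag_mat_def transpose_def)

lemma compact_svd_balanced_factorization:
  assumes svd: "compact_svd M U s V"
  defines "S \<equiv> diag_mat (\<chi> i. sqrt (s $ i))"
  shows "M = (U ** S) ** transpose (V ** S)"
proof -
  have "S ** S = diag_mat s"
    using svd by (simp add: S_def compact_svd_def diag_mat_mult times_vec_def less_imp_le)
  then have "M = U ** (S ** S) ** transpose V"
    using svd by (simp add: compact_svd_def)
  then show ?thesis
    by (simp add: S_def matrix_transpose_mul transpose_diag_mat matrix_mul_assoc)
qed

theorem lemma3:
  fixes X Xs :: "real^'r^'n1" and Y Ys :: "real^'r^'n2"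
    and Ms :: "real^'n2^'n1" and Us :: "real^'r^'n1" and Vs :: "real^'r^'n2"
    and s :: "real^'r"
  assumes svd: "compact_svd Ms Us s Vs"
    and Xs_def: "Xs = Us ** diag_mat (\<chi> i. sqrt (s $ i))"
    and Ys_def: "Ys = Vs ** diag_mat (\<chi> i. sqrt (s $ i))"
    and opt: "\<forall>P :: real^'r^'r. invertible P \<longrightarrow>
       (frob_norm (X ** mat 1 - Xs))\<^sup>2 + (frob_norm (Y ** transpose (matrix_inv (mat 1 :: real^'r^'r)) - Ys))\<^sup>2
       \<le> (frob_norm (X ** P - Xs))\<^sup>2 + (frob_norm (Y ** transpose (matrix_inv P) - Ys))\<^sup>2"
  shows "mat_inner (X - Xs) ((X ** transpose Y - Ms) ** Y)
           \<ge> (frob_norm (Y ** transpose (X - Xs)))\<^sup>2 - 1/4 * (frob_norm (X - Xs))^4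
      \<and> mat_inner (Y - Ys) (transpose (X ** transpose Y - Ms) ** X)
           \<ge> (frob_norm (X ** transpose (Y - Ys)))\<^sup>2 - 1/4 * (frob_norm (Y - Ys))^4"
proof -
  have Ms: "Ms = Xs ** transpose Ys"
    unfolding Xs_def Ys_def by (rule compact_svd_balanced_factorization[OF svd])
  have bal: "transpose X ** (X - Xs) = transpose (Y - Ys) ** Y"
    using opt by (intro alignment_minimizer_balanced) (simp add: alignment_loss_def)
  then have bal': "transpose Y ** (Y - Ys) = transpose (X - Xs) ** X"
    by (metis matrix_transpose_mul transpose_transpose)
  have "transpose (X ** transpose Y - Ms) = Y ** transpose X - Ys ** transpose Xs"
    by (simp add: Ms transpose_diff matrix_transpose_mul)
  then show ?thesis
    using inner_residual_gradient_ge[OF bal] inner_residual_gradient_ge[OF bal']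
    by (simp add: Ms mat_inner_eq_inner frob_norm_eq_norm)
qed

end
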